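(* For every general channel $\mathbf W$, every sequence of cost functions $\mathbf c=\{c_n\}$ and every $K\in\mathbb R$ such that $\mathcal X_{n,c,K}\neq\emptyset$ for all $n$, and every real $R$, \[ C_p(R\mid\mathbf W,\mathbf c,K)=\inf_{\mathbf P\in\mathcal P_{c,K}}\lim_{\gamma\downarrow0}I_p(R-\gamma\mid\mathbf P,\mathbf W)=\inf_{\mathbf P\in\mathcal P_{c,K}}\sup_{\mathbf Q}\lim_{\gamma\downarrow0}J_p(R-\gamma\mid\mathbf P,\mathbf Q,\mathbf W), \] and for every $0\le\epsilon<1$, \[ C(\epsilon\mid\mathbf W,\mathbf c,K)=\sup_{\mathbf P\in\mathcal P_{c,K}}I(\epsilon\mid\mathbf P,\mathbf W)=\sup_{\mathbf P\in\mathcal P_{c,K}}\inf_{\mathbf Q}J(\epsilon\mid\mathbf P,\mathbf Q,\mathbf W). \]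
   Context: A general channel $\mathbf W=\{W^n\}$: finite (or countable) sets $\mathcal X_n,\mathcal Y_n$, distributions $W^n_x$ on $\mathcal Y_n$. $c_n:\mathcal X_n\to\mathbb R$; $\mathcal X_{n,c,K}=\{x\in\mathcal X_n:c_n(x)\le nK\}$. $\mathcal P_{c,K}$ is the set of sequences $\mathbf P=\{P^n\}$ of distributions on $\mathcal X_n$ with $\mathrm{supp}(P^n)\subset\mathcal X_{n,c,K}$ for all $n$; $\mathbf Q=\{Q^n\}$ ranges over sequences of distributions on $\mathcal Y_n$; $W^n_{P^n}=\sum_xP^n(x)W^n_x$; logs natural. $I_p(R|\mathbf P,\mathbf W)=\limsup_n\sum_xP^n(x)W^n_x\{\frac1n\log\frac{W^n_x(y)}{W^n_{P^n}(y)}<R\}$, $I(\epsilon|\mathbf P,\mathbf W)=\sup\{R:I_p(R|\mathbf P,\mathbf W)\le\epsilon\}$; $J_p,J$ are the same with $W^n_{P^n}$ replaced by $Q^n$. A code $\Phi=(N,\phi,\{\mathcal D_i\})$ for $W^n$ has $\phi:\{1..N\}\to\mathcal X_n$, disjoint decoding sets $\mathcal D_i\subset\mathcal Y_n$, $|\Phi|=N$, $\mathrm{supp}(\Phi)=\{\phi(1),\dots,\phi(N)\}$, $P_{e,W^n}(\Phi)=\frac1N\sum_i(1-W^n_{\phi(i)}(\mathcal D_i))$. Over code sequences with $\mathrm{supp}(\Phi_n)\subset\mathcal X_{n,c,K}$: $C_p(R|\mathbf W,\mathbf c,K)=\inf\{\limsup_nP_{e,W^n}(\Phi_n):\liminf_n\frac1n\log|\Phi_n|\ge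 R\}$, $C(\epsilon|\mathbf W,\mathbf c,K)=\sup\{\liminf_n\frac1n\log|\Phi_n|:\limsup_nP_{e,W^n}(\Phi_n)\le\epsilon\}$. *)

theory Defs
  imports "HOL-Probability.Probability"
begin

text \<open>General channel: W n x is the output distribution W^n_x of the n-th channel
  on input x; X n is the (countable) input alphabet of the n-th channel; outputs live in
  the type 'y. Logarithms are natural (ln).\<close>

definition Xck :: "(nat \<Rightarrow> 'x set) \<Rightarrow> (nat \<Rightarrow> 'x \<Rightarrow> real) \<Rightarrow> real \<Rightarrow> nat \<Rightarrow> 'x set" where
  "Xck X c K n = {x \<in> X n. c n x \<le> real n * K}"

definition Pck :: "(nat \<Rightarrow> 'x set) \<Rightarrow> (nat \<Rightarrow> 'x \<Rightarrow> real) \<Rightarrow> real \<Rightarrow> (nat \<Rightarrow> 'x pmf) set" where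
  "Pck X c K = {P. \<forall>n. set_pmf (P n) \<subseteq> Xck X c K n}"

definition outdist :: "(nat \<Rightarrow> 'x \<Rightarrow> 'y pmf) \<Rightarrow> (nat \<Rightarrow> 'x pmf) \<Rightarrow> nat \<Rightarrow> 'y pmf" where
  "outdist W P n = bind_pmf (P n) (W n)"

definition joint :: "(nat \<Rightarrow> 'x \<Rightarrow> 'y pmf) \<Rightarrow> (nat \<Rightarrow> 'x pmf) \<Rightarrow> nat \<Rightarrow> ('x \<times> 'y) pmf" where
  "joint W P n = bind_pmf (P n) (\<lambda>x. map_pmf (\<lambda>y. (x, y)) (W n x))"

text \<open>sum_x P^n(x) W^n_x{ (1/n) log (W^n_x(y)/Q^n(y)) < R }.  When Q^n(y) = 0 (and
  W^n_x(y) > 0) the log-ratio is +infinity, so such y never belong to the event.\<close>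
definition dens_prob :: "(nat \<Rightarrow> 'x \<Rightarrow> 'y pmf) \<Rightarrow> (nat \<Rightarrow> 'x pmf) \<Rightarrow> (nat \<Rightarrow> 'y pmf) \<Rightarrow> real \<Rightarrow> nat \<Rightarrow> real" where
  "dens_prob W P Q R n = measure_pmf.prob (joint W P n)
     {(x, y). 0 < pmf (Q n) y \<and> (1 / real n) * ln (pmf (W n x) y / pmf (Q n) y) < R}"

definition Jp :: "real \<Rightarrow> (nat \<Rightarrow> 'x pmf) \<Rightarrow> (nat \<Rightarrow> 'y pmf) \<Rightarrow> (nat \<Rightarrow> 'x \<Rightarrow> 'y pmf) \<Rightarrow> ereal" where
  "Jp R P Q W = limsup (\<lambda>n. ereal (dens_prob W P Q R n))"

definition Ip :: "real \<Rightarrow> (nat \<Rightarrow> 'x pmf) \<Rightarrow> (nat \<Rightarrow> 'x \<Rightarrow> 'y pmf) \<Rightarrow> ereal" where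
  "Ip R P W = limsup (\<lambda>n. ereal (dens_prob W P (outdist W P) R n))"

definition Jeps :: "real \<Rightarrow> (nat \<Rightarrow> 'x pmf) \<Rightarrow> (nat \<Rightarrow> 'y pmf) \<Rightarrow> (nat \<Rightarrow> 'x \<Rightarrow> 'y pmf) \<Rightarrow> ereal" where
  "Jeps eps P Q W = Sup {ereal R | R. Jp R P Q W \<le> ereal eps}"

definition Ieps :: "real \<Rightarrow> (nat \<Rightarrow> 'x pmf) \<Rightarrow> (nat \<Rightarrow> 'x \<Rightarrow> 'y pmf) \<Rightarrow> ereal" where
  "Ieps eps P W = Sup {ereal R | R. Ip R P W \<le> ereal eps}"

text \<open>A code (N, phi, D) for W^n with messages 1..N, codewords in X_{n,c,K}
  and pairwise disjoint decoding sets.\<close>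
type_synonym ('x, 'y) code = "nat \<times> (nat \<Rightarrow> 'x) \<times> (nat \<Rightarrow> 'y set)"

definition is_code :: "(nat \<Rightarrow> 'x set) \<Rightarrow> (nat \<Rightarrow> 'x \<Rightarrow> real) \<Rightarrow> real \<Rightarrow> nat \<Rightarrow> ('x, 'y) code \<Rightarrow> bool" where
  "is_code X c K n \<Phi> = (case \<Phi> of (N, \<phi>, D) \<Rightarrow>
      1 \<le> N \<and> (\<forall>i\<in>{1..N}. \<phi> i \<in> Xck X c K n) \<and>
      (\<forall>i\<in>{1..N}. \<forall>j\<in>{1..N}. i \<noteq> j \<longrightarrow> D i \<inter> D j = {}))"

definition code_size :: "('x, 'y) code \<Rightarrow> nat" where
  "code_size \<Phi> = fst \<Phi>"

definition err_prob :: "('x \<Rightarrow> 'y pmf) \<Rightarrow> ('x, 'y) code \<Rightarrow> real" where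
  "err_prob Wn \<Phi> = (case \<Phi> of (N, \<phi>, D) \<Rightarrow>
      (1 / real N) * (\<Sum>i = 1..N. 1 - measure_pmf.prob (Wn (\<phi> i)) (D i)))"

definition code_seqs :: "(nat \<Rightarrow> 'x set) \<Rightarrow> (nat \<Rightarrow> 'x \<Rightarrow> real) \<Rightarrow> real \<Rightarrow> (nat \<Rightarrow> ('x, 'y) code) set" where
  "code_seqs X c K = {\<Phi>. \<forall>n. is_code X c K n (\<Phi> n)}"

definition rate_liminf :: "(nat \<Rightarrow> ('x, 'y) code) \<Rightarrow> ereal" where
  "rate_liminf \<Phi> = liminf (\<lambda>n. ereal ((1 / real n) * ln (real (code_size (\<Phi> n)))))"

definition err_limsup :: "(nat \<Rightarrow> 'x \<Rightarrow> 'y pmf) \<Rightarrow> (nat \<Rightarrow> ('x, 'y) code) \<Rightarrow> ereal" where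
  "err_limsup W \<Phi> = limsup (\<lambda>n. ereal (err_prob (W n) (\<Phi> n)))"

definition Cp :: "real \<Rightarrow> (nat \<Rightarrow> 'x \<Rightarrow> 'y pmf) \<Rightarrow> (nat \<Rightarrow> 'x set) \<Rightarrow> (nat \<Rightarrow> 'x \<Rightarrow> real) \<Rightarrow> real \<Rightarrow> ereal" where
  "Cp R W X c K = Inf {err_limsup W \<Phi> | \<Phi>. \<Phi> \<in> code_seqs X c K \<and> rate_liminf \<Phi> \<ge> ereal R}"

definition Ceps :: "real \<Rightarrow> (nat \<Rightarrow> 'x \<Rightarrow> 'y pmf) \<Rightarrow> (nat \<Rightarrow> 'x set) \<Rightarrow> (nat \<Rightarrow> 'x \<Rightarrow> real) \<Rightarrow> real \<Rightarrow> ereal" where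
  "Ceps eps W X c K = Sup {rate_liminf \<Phi> | \<Phi>. \<Phi> \<in> code_seqs X c K \<and> err_limsup W \<Phi> \<le> ereal eps}"

end

theory Submission
  imports Defs
begin

(* The two capacity formulas of the general-channel coding theorem (Verdu-Han,
   with input cost constraint) are obtained from two one-shot bounds:

   - Feinstein's lemma (achievability): for any input distribution p and threshold
     beta, a greedy choice of M codewords from supp p with decoding sets
     {y. beta q(y) < V_x(y)} yields a code of maximal error at most
     Pr[V_x(y) <= beta q(y)] + M / beta;
   - the Verdu-Han lemma (converse): for the uniform distribution on the codewords
     of any M-code, Pr[V_x(y) <= alpha q(y)] <= P_e + alpha / M.

   Letting the thresholds be exp (n R) turns both bounds into statements about the
   information spectrum I_p, and an elementary change-of-measure bound shows that
   replacing the output distribution W_P by an arbitrary Q only shifts the spectrum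
   (J_p (R) <= I_p (R + gamma)), whence the Q-formulas.  Since the spectra are monotone
   in R, the limits gamma -> 0+ appearing in the statement are suprema. *)

lemma prob_bind_pmf:
  "measure_pmf.prob (bind_pmf p N) A = (\<integral>x. measure_pmf.prob (N x) A \<partial>measure_pmf p)"
proof -
  have int: "integrable (measure_pmf p) (\<lambda>x. measure_pmf.prob (N x) A)"
    by (intro measure_pmf.integrable_const_bound[where B=1]) auto
  have "ennreal (measure_pmf.prob (bind_pmf p N) A) = emeasure (bind_pmf p N) A"
    by (simp only: measure_pmf.emeasure_eq_measure)
  also have "\<dots> = (\<integral>\<^sup>+x. emeasure (N x) A \<partial>measure_pmf p)"
    by (rule emeasure_bind_pmf)
  also have "\<dots> = (\<integral>\<^sup>+x. ennreal (measure_pmf.prob (N x) A) \<partial>measure_pmf p)"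
    by (simp only: measure_pmf.emeasure_eq_measure)
  also have "\<dots> = ennreal (\<integral>x. measure_pmf.prob (N x) A \<partial>measure_pmf p)"
    by (rule nn_integral_eq_integral[OF int]) auto
  finally show ?thesis
    by (simp add: integral_nonneg_AE)
qed

lemma integrable_prob: "integrable (measure_pmf p) (\<lambda>x. measure_pmf.prob (N x) (A x))"
  by (intro measure_pmf.integrable_const_bound[where B=1]) auto

lemma prob_joint:
  "measure_pmf.prob (bind_pmf p (\<lambda>x. map_pmf (Pair x) (V x))) A
   = (\<integral>x. measure_pmf.prob (V x) {y. (x,y) \<in> A} \<partial>measure_pmf p)"
  by (simp add: prob_bind_pmf vimage_def)

lemma prob_le_by_density:
  assumes c: "c \<ge> 0" and le: "\<And>y. y \<in> A \<Longrightarrow> pmf q y \<le> c * pmf r y"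
  shows "measure_pmf.prob q A \<le> c * measure_pmf.prob r A"
proof -
  have "emeasure (measure_pmf q) A = (\<integral>\<^sup>+ y. ennreal (pmf q y) * indicator A y \<partial>count_space UNIV)"
    by (simp add: nn_integral_measure_pmf[symmetric])
  also have "\<dots> \<le> (\<integral>\<^sup>+ y. ennreal c * (ennreal (pmf r y) * indicator A y) \<partial>count_space UNIV)"
    by (intro nn_integral_mono)
      (auto simp: indicator_def le c ennreal_mult[symmetric] intro!: ennreal_leI)
  also have "\<dots> = ennreal c * emeasure (measure_pmf r) A"
    by (simp add: nn_integral_cmult nn_integral_measure_pmf[symmetric])
  finally have "ennreal (measure_pmf.prob q A) \<le> ennreal (c * measure_pmf.prob r A)"
    by (simp add: measure_pmf.emeasure_eq_measure ennreal_mult c)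
  then show ?thesis using c by simp
qed

lemma prob_mono_on_support:
  assumes "\<And>z. z \<in> set_pmf p \<Longrightarrow> z \<in> A \<Longrightarrow> z \<in> B"
  shows "measure_pmf.prob p A \<le> measure_pmf.prob p B"
proof -
  have "measure_pmf.prob p A = measure_pmf.prob p (A \<inter> set_pmf p)"
    by (simp add: measure_Int_set_pmf)
  also have "\<dots> \<le> measure_pmf.prob p B"
    using assms by (intro measure_pmf.finite_measure_mono) auto
  finally show ?thesis .
qed

lemma prob_eq_on_support:
  assumes "\<And>z. z \<in> set_pmf p \<Longrightarrow> z \<in> A \<longleftrightarrow> z \<in> B"
  shows "measure_pmf.prob p A = measure_pmf.prob p B"
  using prob_mono_on_support[of p A B] prob_mono_on_support[of p B A] assms by auto

subsection \<open>One-shot bounds\<close>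

definition feinstein_region :: "('x \<Rightarrow> 'y pmf) \<Rightarrow> 'y pmf \<Rightarrow> real \<Rightarrow> 'x \<Rightarrow> 'y set" where
  "feinstein_region V q \<beta> x = {y. \<beta> * pmf q y < pmf (V x) y}"

lemma prob_feinstein_region:
  assumes "\<beta> > 0" and "A \<subseteq> feinstein_region V q \<beta> x"
  shows "measure_pmf.prob q A \<le> 1 / \<beta>"
proof -
  have "measure_pmf.prob q A \<le> (1/\<beta>) * measure_pmf.prob (V x) A"
    using assms by (intro prob_le_by_density) (auto simp: feinstein_region_def field_simps)
  also have "\<dots> \<le> 1/\<beta>"
    using assms by (simp add: divide_right_mono)
  finally show ?thesis .
qed

lemma prob_Union_feinstein_regions:
  assumes bpos: "\<beta> > 0" and I: "finite I"
    and E: "\<And>i. i \<in> I \<Longrightarrow> E i \<subseteq> feinstein_region V q \<beta> (\<phi> i)"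
  shows "measure_pmf.prob q (\<Union>i\<in>I. E i) \<le> card I / \<beta>"
proof -
  have "measure_pmf.prob q (\<Union>i\<in>I. E i) \<le> (\<Sum>i\<in>I. measure_pmf.prob q (E i))"
    using I by (intro measure_pmf.finite_measure_subadditive_finite) auto
  also have "\<dots> \<le> (\<Sum>i\<in>I. 1 / \<beta>)"
    using E bpos by (intro sum_mono prob_feinstein_region) auto
  finally show ?thesis by simp
qed

text \<open>The greedy step of Feinstein's construction: as long as fewer than M codewords have been
  chosen, some input still sees probability 1 - eps on its region minus the sets used so far.\<close>
lemma feinstein_step:
  fixes V :: "'x \<Rightarrow> 'y pmf" and p :: "'x pmf" and \<beta> :: real and M :: nat and I :: "nat set"
  assumes bpos: "\<beta> > 0" and I: "finite I" "card I < M"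
  defines "q \<equiv> bind_pmf p V" and "j \<equiv> bind_pmf p (\<lambda>x. map_pmf (Pair x) (V x))"
  defines "\<epsilon> \<equiv> measure_pmf.prob j {(x,y). pmf (V x) y \<le> \<beta> * pmf q y} + M/\<beta>"
  assumes E: "\<And>i. i \<in> I \<Longrightarrow> E i \<subseteq> feinstein_region V q \<beta> (\<phi> i)"
  shows "\<exists>x\<in>set_pmf p. 1 - \<epsilon> \<le> measure_pmf.prob (V x) (feinstein_region V q \<beta> x - (\<Union>i\<in>I. E i))"
proof (rule ccontr)
  define D where "D = feinstein_region V q \<beta>"
  define U where "U = (\<Union>i\<in>I. E i)"
  assume "\<not> ?thesis"
  then have small: "measure_pmf.prob (V x) (D x - U) \<le> 1 - \<epsilon>" if "x \<in> set_pmf p" for x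
    using that by (auto simp: D_def U_def)
  have qU: "measure_pmf.prob q U \<le> card I / \<beta>"
    unfolding U_def using bpos I(1) E by (rule prob_Union_feinstein_regions)
  have compl: "measure_pmf.prob j {(x,y). pmf (V x) y \<le> \<beta> * pmf q y}
      = 1 - measure_pmf.prob j {(x,y). y \<in> D x}"
  proof -
    have "{(x,y). pmf (V x) y \<le> \<beta> * pmf q y} = UNIV - {(x,y). y \<in> D x}"
      by (auto simp: D_def feinstein_region_def not_less)
    then show ?thesis using measure_pmf.prob_compl[of "{(x,y). y \<in> D x}" j] by simp
  qed
  have "measure_pmf.prob j {(x,y). y \<in> D x} = (\<integral>x. measure_pmf.prob (V x) (D x) \<partial>measure_pmf p)"
    unfolding j_def by (simp add: prob_joint)
  also have "\<dots> \<le> (\<integral>x. (1 - \<epsilon>) + measure_pmf.prob (V x) U \<partial>measure_pmf p)"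
  proof (rule integral_mono_AE)
    show "AE x in measure_pmf p. measure_pmf.prob (V x) (D x) \<le> 1 - \<epsilon> + measure_pmf.prob (V x) U"
    proof (rule AE_pmfI)
      fix x assume x: "x \<in> set_pmf p"
      have "measure_pmf.prob (V x) (D x) \<le> measure_pmf.prob (V x) ((D x - U) \<union> U)"
        by (rule measure_pmf.finite_measure_mono) auto
      also have "\<dots> \<le> measure_pmf.prob (V x) (D x - U) + measure_pmf.prob (V x) U"
        by (rule measure_subadditive) auto
      finally show "measure_pmf.prob (V x) (D x) \<le> 1 - \<epsilon> + measure_pmf.prob (V x) U"
        using small[OF x] by simp
    qed
  qed (use integrable_prob[of p V "\<lambda>_. U"] in \<open>simp_all add: integrable_prob\<close>)
  also have "\<dots> = (1 - \<epsilon>) + measure_pmf.prob q U"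
    using integrable_prob[of p V "\<lambda>_. U"] by (simp add: q_def prob_bind_pmf)
  finally have "M / \<beta> \<le> card I / \<beta>"
    using qU unfolding compl \<epsilon>_def by simp
  then show False
    using bpos I by (simp add: divide_le_cancel)
qed

lemma feinstein:
  fixes V :: "'x \<Rightarrow> 'y pmf" and p :: "'x pmf" and \<beta> :: real and M :: nat
  assumes bpos: "\<beta> > 0"
  defines "q \<equiv> bind_pmf p V" and "j \<equiv> bind_pmf p (\<lambda>x. map_pmf (Pair x) (V x))"
  defines "\<epsilon> \<equiv> measure_pmf.prob j {(x,y). pmf (V x) y \<le> \<beta> * pmf q y} + M/\<beta>"
  shows "\<exists>\<phi> E. (\<forall>i\<in>{1..M}. \<phi> i \<in> set_pmf p) \<and> disjoint_family_on E {1..M}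
     \<and> (\<forall>i\<in>{1..M}. 1 - \<epsilon> \<le> measure_pmf.prob (V (\<phi> i)) (E i))"
proof -
  define D where "D = feinstein_region V q \<beta>"
  have "\<exists>\<phi> E. (\<forall>i\<in>{1..m}. \<phi> i \<in> set_pmf p \<and> E i \<subseteq> D (\<phi> i)
                   \<and> 1 - \<epsilon> \<le> measure_pmf.prob (V (\<phi> i)) (E i))
              \<and> disjoint_family_on E {1..m}" if "m \<le> M" for m
    using that
  proof (induction m)
    case 0
    then show ?case by (auto simp: disjoint_family_on_def)
  next
    case (Suc m)
    then obtain \<phi> E where
      good: "\<forall>i\<in>{1..m}. \<phi> i \<in> set_pmf p \<and> E i \<subseteq> D (\<phi> i) \<and> 1 - \<epsilon> \<le> measure_pmf.prob (V (\<phi> i)) (E i)"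
      and dj: "disjoint_family_on E {1..m}" by auto
    obtain x where x: "x \<in> set_pmf p" "1 - \<epsilon> \<le> measure_pmf.prob (V x) (D x - (\<Union>i\<in>{1..m}. E i))"
      using feinstein_step[OF bpos, where I="{1..m}" and M=M and p=p and V=V and E=E and \<phi>=\<phi>] Suc.prems good
      unfolding D_def q_def j_def \<epsilon>_def by auto
    define E' where "E' = E(Suc m := D x - (\<Union>i\<in>{1..m}. E i))"
    have "disjoint_family_on E' (insert (Suc m) {1..m})"
      using dj by (subst disjoint_family_on_insert) (auto simp: E'_def disjoint_family_on_def)
    moreover have "insert (Suc m) {1..m} = {1..Suc m}" by auto
    ultimately have dj': "disjoint_family_on E' {1..Suc m}" by simp
    have "\<forall>i\<in>{1..Suc m}. (\<phi>(Suc m := x)) i \<in> set_pmf p \<and> E' i \<subseteq> D ((\<phi>(Suc m := x)) i)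
            \<and> 1 - \<epsilon> \<le> measure_pmf.prob (V ((\<phi>(Suc m := x)) i)) (E' i)"
      using good x by (auto simp: E'_def le_Suc_eq)
    with dj' show ?case by blast
  qed
  then show ?thesis by blast
qed

lemma verdu_han_converse:
  fixes V :: "'x \<Rightarrow> 'y pmf" and \<phi> :: "nat \<Rightarrow> 'x" and D :: "nat \<Rightarrow> 'y set" and M :: nat
  assumes M: "M \<ge> 1" and disj: "disjoint_family_on D {1..M}" and a: "\<alpha> \<ge> 0"
  defines "p \<equiv> map_pmf \<phi> (pmf_of_set {1..M})"
  defines "q \<equiv> bind_pmf p V" and "j \<equiv> bind_pmf p (\<lambda>x. map_pmf (Pair x) (V x))"
  shows "measure_pmf.prob j {(x,y). pmf (V x) y \<le> \<alpha> * pmf q y}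
      \<le> (1 / real M) * (\<Sum>i = 1..M. 1 - measure_pmf.prob (V (\<phi> i)) (D i)) + \<alpha> / M"
proof -
  define B where "B = {(x,y). pmf (V x) y \<le> \<alpha> * pmf q y}"
  have per_codeword: "measure_pmf.prob (V (\<phi> i)) {y. (\<phi> i,y) \<in> B}
      \<le> (1 - measure_pmf.prob (V (\<phi> i)) (D i)) + \<alpha> * measure_pmf.prob q (D i)" for i
  proof -
    let ?B = "{y. (\<phi> i,y) \<in> B}"
    have "measure_pmf.prob (V (\<phi> i)) ?B \<le> measure_pmf.prob (V (\<phi> i)) ((?B \<inter> D i) \<union> (UNIV - D i))"
      by (rule measure_pmf.finite_measure_mono) auto
    also have "\<dots> \<le> measure_pmf.prob (V (\<phi> i)) (?B \<inter> D i) + measure_pmf.prob (V (\<phi> i)) (UNIV - D i)"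
      by (rule measure_subadditive) auto
    also have "measure_pmf.prob (V (\<phi> i)) (UNIV - D i) = 1 - measure_pmf.prob (V (\<phi> i)) (D i)"
      using measure_pmf.prob_compl[of "D i" "V (\<phi> i)"] by simp
    also have "measure_pmf.prob (V (\<phi> i)) (?B \<inter> D i) \<le> \<alpha> * measure_pmf.prob q (?B \<inter> D i)"
      by (rule prob_le_by_density[OF a]) (auto simp: B_def)
    also have "\<dots> \<le> \<alpha> * measure_pmf.prob q (D i)"
      using a by (intro mult_left_mono measure_pmf.finite_measure_mono) auto
    finally show ?thesis by simp
  qed
  have "measure_pmf.prob j B = (\<Sum>i = 1..M. measure_pmf.prob (V (\<phi> i)) {y. (\<phi> i,y) \<in> B}) / M"
    using M unfolding j_def p_def by (simp add: prob_joint integral_pmf_of_set)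
  also have "\<dots> \<le> (\<Sum>i = 1..M. (1 - measure_pmf.prob (V (\<phi> i)) (D i)) + \<alpha> * measure_pmf.prob q (D i)) / M"
    by (intro divide_right_mono sum_mono per_codeword) simp
  also have "\<dots> = (\<Sum>i = 1..M. 1 - measure_pmf.prob (V (\<phi> i)) (D i)) / M
                   + \<alpha> * (\<Sum>i = 1..M. measure_pmf.prob q (D i)) / M"
    by (simp add: sum.distrib sum_distrib_left add_divide_distrib)
  also have "(\<Sum>i = 1..M. measure_pmf.prob q (D i)) = measure_pmf.prob q (\<Union>i\<in>{1..M}. D i)"
    using disj by (intro measure_pmf.finite_measure_finite_Union[symmetric]) auto
  also have "\<alpha> * measure_pmf.prob q (\<Union>i\<in>{1..M}. D i) / M \<le> \<alpha> / M"
    using a by (intro divide_right_mono mult_left_le) auto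
  finally show ?thesis unfolding B_def by simp
qed

lemma change_output_measure:
  fixes V :: "'x \<Rightarrow> 'y pmf" and p :: "'x pmf" and Q :: "'y pmf"
  assumes a: "\<alpha> > 0" and t: "t > 0"
  defines "q \<equiv> bind_pmf p V" and "j \<equiv> bind_pmf p (\<lambda>x. map_pmf (Pair x) (V x))"
  shows "measure_pmf.prob j {(x,y). 0 < pmf Q y \<and> pmf (V x) y < \<alpha> * pmf Q y}
     \<le> measure_pmf.prob j {(x,y). pmf (V x) y < \<alpha> * t * pmf q y} + 1 / t"
proof -
  define C where "C = {y. t * pmf q y < pmf Q y}"
  have "{(x,y). 0 < pmf Q y \<and> pmf (V x) y < \<alpha> * pmf Q y}
        \<subseteq> {(x,y). pmf (V x) y < \<alpha> * t * pmf q y} \<union> UNIV \<times> C"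
  proof
    fix z assume "z \<in> {(x,y). 0 < pmf Q y \<and> pmf (V x) y < \<alpha> * pmf Q y}"
    then obtain x y where z: "z = (x,y)" and h: "pmf (V x) y < \<alpha> * pmf Q y" by auto
    show "z \<in> {(x,y). pmf (V x) y < \<alpha> * t * pmf q y} \<union> UNIV \<times> C"
    proof (cases "y \<in> C")
      case False
      then have "\<alpha> * pmf Q y \<le> \<alpha> * (t * pmf q y)" using a by (simp add: C_def not_less)
      with h show ?thesis by (simp add: z mult.assoc)
    qed (simp add: z)
  qed
  then have "measure_pmf.prob j {(x,y). 0 < pmf Q y \<and> pmf (V x) y < \<alpha> * pmf Q y}
     \<le> measure_pmf.prob j ({(x,y). pmf (V x) y < \<alpha> * t * pmf q y} \<union> UNIV \<times> C)"
    by (rule measure_pmf.finite_measure_mono) simp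
  also have "\<dots> \<le> measure_pmf.prob j {(x,y). pmf (V x) y < \<alpha> * t * pmf q y} + measure_pmf.prob j (UNIV \<times> C)"
    by (rule measure_subadditive) auto
  also have "measure_pmf.prob j (UNIV \<times> C) = measure_pmf.prob q C"
    unfolding j_def q_def by (simp add: prob_joint prob_bind_pmf)
  also have "\<dots> \<le> (1/t) * measure_pmf.prob Q C"
    by (rule prob_le_by_density) (use t in \<open>auto simp: C_def field_simps\<close>)
  also have "\<dots> \<le> 1 / t" using t by (simp add: divide_right_mono)
  finally show ?thesis by simp
qed

subsection \<open>The information spectrum at blocklength n\<close>

lemma joint_support:
  assumes "(x,y) \<in> set_pmf (joint W P n)"
  shows "0 < pmf (W n x) y" "0 < pmf (outdist W P n) y"
proof -
  from assms have x: "x \<in> set_pmf (P n)" and y: "y \<in> set_pmf (W n x)"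
    by (auto simp: joint_def)
  then show "0 < pmf (W n x) y"
    by (simp add: pmf_positive)
  have "y \<in> set_pmf (outdist W P n)" using x y by (auto simp: outdist_def)
  then show "0 < pmf (outdist W P n) y"
    by (simp add: pmf_positive)
qed

lemma ln_ratio_less_iff:
  assumes n: "n > 0" and v: "v > 0" and w: "w > 0"
  shows "(1 / real n) * ln (v / w) < R \<longleftrightarrow> v < exp (real n * R) * w"
proof -
  have "(1 / real n) * ln (v / w) < R \<longleftrightarrow> ln (v / w) < real n * R"
    using n by (simp add: field_simps)
  also have "\<dots> \<longleftrightarrow> v / w < exp (real n * R)"
    using v w by (metis divide_pos_pos exp_less_cancel_iff exp_ln)
  also have "\<dots> \<longleftrightarrow> v < exp (real n * R) * w"
    using w by (simp add: divide_less_eq)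
  finally show ?thesis .
qed

lemma dens_prob_threshold:
  assumes n: "n > 0"
  shows "dens_prob W P Q R n = measure_pmf.prob (joint W P n)
     {(x, y). 0 < pmf (Q n) y \<and> pmf (W n x) y < exp (real n * R) * pmf (Q n) y}"
  unfolding dens_prob_def
proof (rule prob_eq_on_support)
  fix z assume z: "z \<in> set_pmf (joint W P n)"
  obtain x y where xy: "z = (x, y)" by fastforce
  have v: "0 < pmf (W n x) y" using z xy by (simp add: joint_support(1))
  show "z \<in> {(x, y). 0 < pmf (Q n) y \<and> 1 / real n * ln (pmf (W n x) y / pmf (Q n) y) < R} \<longleftrightarrow>
        z \<in> {(x, y). 0 < pmf (Q n) y \<and> pmf (W n x) y < exp (real n * R) * pmf (Q n) y}"
    using ln_ratio_less_iff[OF n v] xy by auto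
qed

lemma dens_prob_outdist_threshold:
  assumes n: "n > 0"
  shows "dens_prob W P (outdist W P) R n = measure_pmf.prob (joint W P n)
     {(x, y). pmf (W n x) y < exp (real n * R) * pmf (outdist W P n) y}"
  unfolding dens_prob_threshold[OF n]
  by (rule prob_eq_on_support) (auto dest: joint_support(2))

lemma dens_prob_nonneg: "0 \<le> dens_prob W P Q R n"
  by (simp add: dens_prob_def)

lemma dens_prob_le_1: "dens_prob W P Q R n \<le> 1"
  by (simp add: dens_prob_def)

lemma dens_prob_mono: "R \<le> R' \<Longrightarrow> dens_prob W P Q R n \<le> dens_prob W P Q R' n"
  unfolding dens_prob_def by (intro measure_pmf.finite_measure_mono) auto

lemma dens_prob_change_output:
  assumes n: "n > 0" and g: "\<gamma> > 0"
  shows "dens_prob W P Q R n \<le> dens_prob W P (outdist W P) (R + \<gamma>) n + exp (real n * (- \<gamma>))"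
proof -
  have "dens_prob W P Q R n \<le> measure_pmf.prob (joint W P n)
     {(x, y). pmf (W n x) y < exp (real n * R) * exp (real n * \<gamma>) * pmf (outdist W P n) y}
     + 1 / exp (real n * \<gamma>)"
    unfolding dens_prob_threshold[OF n] joint_def outdist_def
    by (rule change_output_measure) auto
  also have "measure_pmf.prob (joint W P n)
     {(x, y). pmf (W n x) y < exp (real n * R) * exp (real n * \<gamma>) * pmf (outdist W P n) y}
     = dens_prob W P (outdist W P) (R + \<gamma>) n"
    by (simp add: dens_prob_outdist_threshold[OF n] exp_add[symmetric] distrib_left)
  finally show ?thesis by (simp add: exp_minus field_simps)
qed

lemma exp_linear_vanish: "c < 0 \<Longrightarrow> (\<lambda>n. exp (real n * c)) \<longlonglongrightarrow> 0"
  by (simp add: exp_of_nat_mult LIMSEQ_power_zero)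

lemma limsup_le_up_to_vanishing:
  fixes a b e :: "nat \<Rightarrow> real"
  assumes ev: "eventually (\<lambda>n. a n \<le> b n + e n) sequentially" and e: "e \<longlonglongrightarrow> 0"
  shows "limsup (\<lambda>n. ereal (a n)) \<le> limsup (\<lambda>n. ereal (b n))"
  unfolding Limsup_le_iff
proof (intro allI impI)
  fix y :: ereal assume y: "limsup (\<lambda>n. ereal (b n)) < y"
  obtain z where z1: "limsup (\<lambda>n. ereal (b n)) < ereal z" and z2: "ereal z < y"
    using ereal_dense2[OF y] by auto
  have evb: "eventually (\<lambda>n. ereal (b n) < ereal z) sequentially" by (rule Limsup_lessD[OF z1])
  show "eventually (\<lambda>n. ereal (a n) < y) sequentially"
  proof (cases y)
    case (real y')
    then have "eventually (\<lambda>n. e n < y' - z) sequentially"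
      using z2 by (intro order_tendstoD(2)[OF e]) simp
    with ev evb show ?thesis
      by eventually_elim (use real in auto)
  qed (use z2 in auto)
qed

lemma eventually_diagonal:
  assumes "\<And>k. eventually (\<lambda>n. Pr k n) sequentially"
  shows "\<exists>\<kappa>::nat\<Rightarrow>nat. filterlim \<kappa> at_top sequentially \<and> eventually (\<lambda>n. Pr (\<kappa> n) n) sequentially"
proof -
  obtain N where N: "\<And>k n. n \<ge> N k \<Longrightarrow> Pr k n"
    using assms unfolding eventually_sequentially by metis
  define N' where "N' k = (\<Sum>i\<le>k. N i) + k" for k
  have N'N: "N k \<le> N' k" and N'k: "k \<le> N' k" for k
    unfolding N'_def by (simp_all add: member_le_sum trans_le_add1)
  define S where "S n = {k. N' k \<le> n}" for n
  have finS: "finite (S n)" for n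
    by (rule finite_subset[of _ "{..n}"]) (auto simp: S_def intro: order_trans[OF N'k])
  define \<kappa> where "\<kappa> n = Max (S n)" for n
  have "eventually (\<lambda>n. k \<le> \<kappa> n) sequentially" for k
    unfolding eventually_sequentially
    by (rule exI[of _ "N' k"]) (auto simp: \<kappa>_def S_def intro!: Max_ge finS[unfolded S_def])
  then have "filterlim \<kappa> at_top sequentially"
    by (simp add: filterlim_at_top)
  moreover have "eventually (\<lambda>n. Pr (\<kappa> n) n) sequentially"
    unfolding eventually_sequentially
  proof (intro exI allI impI)
    fix n assume "N' 0 \<le> n"
    then have "S n \<noteq> {}" by (auto simp: S_def)
    then have "\<kappa> n \<in> S n" unfolding \<kappa>_def using finS by (rule Max_in[rotated])
    then show "Pr (\<kappa> n) n" using N N'N[of "\<kappa> n"] by (auto simp: S_def)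
  qed
  ultimately show ?thesis by blast
qed

lemma diagonal_selection:
  fixes a b :: "nat \<Rightarrow> nat \<Rightarrow> real" and d :: "nat \<Rightarrow> real"
  assumes d: "d \<longlonglongrightarrow> 0"
    and ev: "\<And>k. eventually (\<lambda>n. \<alpha> - d k \<le> a k n \<and> b k n \<le> \<beta> + d k) sequentially"
  shows "\<exists>\<kappa>. ereal \<alpha> \<le> liminf (\<lambda>n. ereal (a (\<kappa> n) n)) \<and> limsup (\<lambda>n. ereal (b (\<kappa> n) n)) \<le> ereal \<beta>"
proof -
  obtain \<kappa> where \<kappa>: "filterlim \<kappa> at_top sequentially"
    and sel: "eventually (\<lambda>n. \<alpha> - d (\<kappa> n) \<le> a (\<kappa> n) n \<and> b (\<kappa> n) n \<le> \<beta> + d (\<kappa> n)) sequentially"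
    using eventually_diagonal[of "\<lambda>k n. \<alpha> - d k \<le> a k n \<and> b k n \<le> \<beta> + d k", OF ev] by blast
  have d\<kappa>: "(\<lambda>n. d (\<kappa> n)) \<longlonglongrightarrow> 0" by (rule filterlim_compose[OF d \<kappa>])
  have "(\<lambda>n. ereal (\<alpha> - d (\<kappa> n))) \<longlonglongrightarrow> ereal \<alpha>"
    using tendsto_diff[OF tendsto_const d\<kappa>, of \<alpha>] by (simp add: lim_ereal)
  then have "ereal \<alpha> = liminf (\<lambda>n. ereal (\<alpha> - d (\<kappa> n)))"
    by (rule lim_imp_Liminf[symmetric, OF trivial_limit_sequentially])
  also have "\<dots> \<le> liminf (\<lambda>n. ereal (a (\<kappa> n) n))"
    using sel by (intro Liminf_mono) (auto elim: eventually_mono)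
  finally have lower: "ereal \<alpha> \<le> liminf (\<lambda>n. ereal (a (\<kappa> n) n))" .
  have "limsup (\<lambda>n. ereal (b (\<kappa> n) n)) \<le> limsup (\<lambda>n. ereal \<beta>)"
    using sel d\<kappa> by (intro limsup_le_up_to_vanishing[where e="\<lambda>n. d (\<kappa> n)"]) (auto elim: eventually_mono)
  then have "limsup (\<lambda>n. ereal (b (\<kappa> n) n)) \<le> ereal \<beta>"
    by (simp add: Limsup_const)
  with lower show ?thesis by blast
qed

lemma Lim_at_right_of_mono:
  fixes f :: "real \<Rightarrow> ereal"
  assumes mono: "\<And>a b. a \<le> b \<Longrightarrow> f a \<le> f b"
  shows "Lim (at_right (0::real)) (\<lambda>\<gamma>. f (R - \<gamma>)) = (SUP \<gamma>\<in>{0<..}. f (R - \<gamma>))"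
proof (rule tendsto_Lim)
  show "((\<lambda>\<gamma>. f (R - \<gamma>)) \<longlongrightarrow> (SUP \<gamma>\<in>{0<..}. f (R - \<gamma>))) (at_right 0)"
  proof (rule order_tendstoI)
    fix a assume "a < (SUP \<gamma>\<in>{0<..}. f (R - \<gamma>))"
    then obtain g0 where g0: "g0 > 0" "a < f (R - g0)" by (auto simp: less_SUP_iff)
    have "a < f (R - y)" if "0 < y" "y < g0" for y
      using g0 mono[of "R - g0" "R - y"] that by simp
    with g0 show "eventually (\<lambda>\<gamma>. a < f (R - \<gamma>)) (at_right 0)"
      unfolding eventually_at_right_field by blast
  next
    fix a assume a: "(SUP \<gamma>\<in>{0<..}. f (R - \<gamma>)) < a"
    have "f (R - y) < a" if "0 < y" for y :: real
      using a SUP_upper[of y "{0<..}" "\<lambda>\<gamma>. f (R - \<gamma>)"] that by simp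
    then show "eventually (\<lambda>\<gamma>. f (R - \<gamma>) < a) (at_right 0)"
      unfolding eventually_at_right_field by (intro exI[of _ "1::real"]) auto
  qed
qed simp

lemma Ip_eq_Jp_outdist: "Ip R P W = Jp R P (outdist W P) W"
  by (simp add: Ip_def Jp_def)

lemma Jp_mono: "R \<le> R' \<Longrightarrow> Jp R P Q W \<le> Jp R' P Q W"
  unfolding Jp_def by (intro Limsup_mono always_eventually allI) (simp add: dens_prob_mono)

lemma Ip_mono: "R \<le> R' \<Longrightarrow> Ip R P W \<le> Ip R' P W"
  unfolding Ip_def by (intro Limsup_mono always_eventually allI) (simp add: dens_prob_mono)

lemma Ip_bounds: "0 \<le> Ip R P W" "Ip R P W \<le> 1"
  unfolding Ip_def
  by (auto intro!: Limsup_bounded le_Limsup always_eventually simp: dens_prob_nonneg dens_prob_le_1)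

lemma Jp_le_Ip_shift:
  assumes g: "\<gamma> > 0"
  shows "Jp R P Q W \<le> Ip (R + \<gamma>) P W"
  unfolding Jp_def Ip_def
proof (rule limsup_le_up_to_vanishing)
  show "eventually (\<lambda>n. dens_prob W P Q R n
      \<le> dens_prob W P (outdist W P) (R + \<gamma>) n + exp (real n * (-\<gamma>))) sequentially"
    using eventually_gt_at_top[of "0::nat"] by eventually_elim (rule dens_prob_change_output[OF _ g])
  show "(\<lambda>n. exp (real n * (-\<gamma>))) \<longlonglongrightarrow> 0" using g by (intro exp_linear_vanish) simp
qed

lemma Ip_Lim: "Lim (at_right (0::real)) (\<lambda>\<gamma>. Ip (R - \<gamma>) P W) = (SUP \<gamma>\<in>{0<..}. Ip (R - \<gamma>) P W)"
  by (rule Lim_at_right_of_mono[where f="\<lambda>x. Ip x P W"]) (rule Ip_mono)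

lemma Jp_Lim: "Lim (at_right (0::real)) (\<lambda>\<gamma>. Jp (R - \<gamma>) P Q W) = (SUP \<gamma>\<in>{0<..}. Jp (R - \<gamma>) P Q W)"
  by (rule Lim_at_right_of_mono[where f="\<lambda>x. Jp x P Q W"]) (rule Jp_mono)

lemma SUP_Jp_eq_Ip:
  "(SUP Q. SUP \<gamma>\<in>{0<..}. Jp (R - \<gamma>) P Q W) = (SUP \<gamma>\<in>{0<..}. Ip (R - \<gamma>) P W)"
proof (rule antisym)
  show "(SUP Q. SUP \<gamma>\<in>{0<..}. Jp (R - \<gamma>) P Q W) \<le> (SUP \<gamma>\<in>{0<..}. Ip (R - \<gamma>) P W)"
  proof (intro SUP_least)
    fix Q and \<gamma> :: real assume "\<gamma> \<in> {0<..}"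
    then have g: "\<gamma> > 0" by simp
    have "Jp (R - \<gamma>) P Q W \<le> Ip (R - \<gamma> + \<gamma>/2) P W" by (rule Jp_le_Ip_shift) (use g in simp)
    also have "\<dots> \<le> (SUP \<gamma>\<in>{0<..}. Ip (R - \<gamma>) P W)"
      using g by (intro SUP_upper2[where i="\<gamma>/2"]) simp_all
    finally show "Jp (R - \<gamma>) P Q W \<le> (SUP \<gamma>\<in>{0<..}. Ip (R - \<gamma>) P W)" .
  qed
  show "(SUP \<gamma>\<in>{0<..}. Ip (R - \<gamma>) P W) \<le> (SUP Q. SUP \<gamma>\<in>{0<..}. Jp (R - \<gamma>) P Q W)"
    by (rule SUP_upper2[where i="outdist W P"]) (auto simp: Ip_eq_Jp_outdist)
qed

lemma Ieps_eq_INF_Jeps: "Ieps eps P W = (INF Q. Jeps eps P Q W)"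
proof (rule antisym)
  show "Ieps eps P W \<le> (INF Q. Jeps eps P Q W)"
  proof (rule INF_greatest)
    fix Q
    show "Ieps eps P W \<le> Jeps eps P Q W"
      unfolding Ieps_def
    proof (rule Sup_least, clarify)
      fix R assume R: "Ip R P W \<le> ereal eps"
      show "ereal R \<le> Jeps eps P Q W"
      proof (rule ereal_le_epsilon2)
        fix e :: real assume e: "0 < e"
        have "Jp (R - e) P Q W \<le> Ip (R - e + e) P W" by (rule Jp_le_Ip_shift[OF e])
        with R have "ereal (R - e) \<le> Jeps eps P Q W" unfolding Jeps_def by (intro Sup_upper) auto
        then have "ereal (R - e) + ereal e \<le> Jeps eps P Q W + ereal e" by (rule add_right_mono)
        then show "ereal R \<le> Jeps eps P Q W + ereal e" by simp
      qed
    qed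
  qed
  show "(INF Q. Jeps eps P Q W) \<le> Ieps eps P W"
    by (rule INF_lower2[where i="outdist W P"]) (auto simp: Ieps_def Jeps_def Ip_eq_Jp_outdist)
qed

lemma err_prob_le_uniform:
  assumes M: "M \<ge> 1" and correct: "\<forall>i\<in>{1..M}. 1 - \<epsilon> \<le> measure_pmf.prob (Wn (\<phi> i)) (E i)"
  shows "err_prob Wn (M, \<phi>, E) \<le> \<epsilon>"
proof -
  have "err_prob Wn (M, \<phi>, E) = (1 / real M) * (\<Sum>i = 1..M. 1 - measure_pmf.prob (Wn (\<phi> i)) (E i))"
    by (simp add: err_prob_def)
  also have "\<dots> \<le> (1 / real M) * (\<Sum>i = 1..M. \<epsilon>)"
    using correct by (intro mult_left_mono sum_mono) (auto simp: algebra_simps)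
  also have "\<dots> = \<epsilon>" using M by simp
  finally show ?thesis .
qed

lemma single_codeword_code:
  assumes "x0 \<in> Xck X c K n"
  shows "is_code X c K n (1, \<lambda>_. x0, \<lambda>_. UNIV) \<and> code_size (1, \<lambda>_. x0, \<lambda>_. UNIV) = 1
         \<and> err_prob Wn (1, \<lambda>_. x0, \<lambda>_. UNIV :: 'y set) = 0"
  using assms by (simp add: is_code_def code_size_def err_prob_def)

lemma ceiling_exp_bounds:
  assumes "t \<ge> 0"
  shows "1 \<le> nat \<lceil>exp t\<rceil>" "exp t \<le> real (nat \<lceil>exp t\<rceil>)" "real (nat \<lceil>exp t\<rceil>) \<le> 2 * exp t"
proof -
  have e1: "1 \<le> exp t" using assms by simp
  then show "1 \<le> nat \<lceil>exp t\<rceil>" by linarith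
  show "exp t \<le> real (nat \<lceil>exp t\<rceil>)" by linarith
  show "real (nat \<lceil>exp t\<rceil>) \<le> 2 * exp t" using e1 by linarith
qed

text \<open>Feinstein's lemma with M = ceil (exp (n r)) and beta = exp (n (r + gamma/2)) gives a code of
  rate at least r whose error is bounded by the spectrum at r + gamma plus 2 exp (-n gamma/2).\<close>
lemma feinstein_code:
  assumes P: "set_pmf (P n) \<subseteq> Xck X c K n" and n: "n > 0" and r: "r > 0" and g: "\<gamma> > 0"
  shows "\<exists>C. is_code X c K n C \<and> r \<le> (1 / real n) * ln (real (code_size C))
     \<and> err_prob (W n) C \<le> dens_prob W P (outdist W P) (r + \<gamma>) n + 2 * exp (real n * (- \<gamma> / 2))"
proof -
  define M where "M = nat \<lceil>exp (real n * r)\<rceil>"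
  define \<beta> where "\<beta> = exp (real n * (r + \<gamma>/2))"
  have nr: "real n * r \<ge> 0" using n r by simp
  note M_bounds = ceiling_exp_bounds[OF nr, folded M_def]
  have bpos: "\<beta> > 0" by (simp add: \<beta>_def)
  let ?j = "joint W P n" and ?q = "outdist W P n"
  let ?\<epsilon> = "measure_pmf.prob ?j {(x,y). pmf (W n x) y \<le> \<beta> * pmf ?q y} + M/\<beta>"
  obtain \<phi> E where ph: "\<forall>i\<in>{1..M}. \<phi> i \<in> set_pmf (P n)" and dj: "disjoint_family_on E {1..M}"
    and correct: "\<forall>i\<in>{1..M}. 1 - ?\<epsilon> \<le> measure_pmf.prob (W n (\<phi> i)) (E i)"
    using feinstein[OF bpos, where p="P n" and V="W n" and M=M] unfolding joint_def outdist_def by blast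
  define C where "C = (M, \<phi>, E)"
  have code: "is_code X c K n C"
    using M_bounds ph dj P by (auto simp: C_def is_code_def disjoint_family_on_def)
  have "err_prob (W n) C \<le> ?\<epsilon>"
    unfolding C_def using M_bounds(1) correct by (rule err_prob_le_uniform)
  also have "measure_pmf.prob ?j {(x,y). pmf (W n x) y \<le> \<beta> * pmf ?q y}
      \<le> dens_prob W P (outdist W P) (r + \<gamma>) n"
    unfolding dens_prob_outdist_threshold[OF n]
  proof (rule prob_mono_on_support)
    fix z assume z: "z \<in> set_pmf ?j" and zA: "z \<in> {(x,y). pmf (W n x) y \<le> \<beta> * pmf ?q y}"
    obtain x y where xy: "z = (x,y)" by fastforce
    have "0 < pmf ?q y" using z xy by (simp add: joint_support(2))
    moreover have "\<beta> < exp (real n * (r + \<gamma>))" unfolding \<beta>_def using n g by simp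
    ultimately show "z \<in> {(x,y). pmf (W n x) y < exp (real n * (r + \<gamma>)) * pmf ?q y}"
      using zA xy by (auto intro: order.strict_trans1)
  qed
  also have "M / \<beta> \<le> 2 * exp (real n * r) / \<beta>"
    using M_bounds bpos by (simp add: divide_right_mono)
  also have "2 * exp (real n * r) / \<beta> = 2 * exp (real n * (- \<gamma> / 2))"
  proof -
    have "\<beta> = exp (real n * r) * exp (real n * (\<gamma> / 2))"
      by (simp add: \<beta>_def distrib_left exp_add)
    moreover have "exp (real n * (- \<gamma> / 2)) = inverse (exp (real n * (\<gamma> / 2)))"
      by (simp add: exp_minus[symmetric])
    ultimately show ?thesis by (simp add: field_simps)
  qed
  finally have err: "err_prob (W n) C \<le> dens_prob W P (outdist W P) (r + \<gamma>) n + 2 * exp (real n * (- \<gamma> / 2))"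
    by simp
  have "real n * r \<le> ln (real M)"
    using M_bounds by (subst ln_ge_iff) auto
  then have "r \<le> (1 / real n) * ln (real (code_size C))"
    using n by (simp add: C_def code_size_def field_simps)
  with code err show ?thesis by blast
qed

lemma code_sequence_exists:
  assumes P: "P \<in> Pck X c K" and ne: "\<And>n. Xck X c K n \<noteq> {}" and g: "\<gamma> > 0"
  shows "\<exists>\<Phi>\<in>code_seqs X c K. \<forall>n>0. r \<le> (1 / real n) * ln (real (code_size (\<Phi> n)))
     \<and> err_prob (W n) (\<Phi> n) \<le> dens_prob W P (outdist W P) (r + \<gamma>) n + 2 * exp (real n * (- \<gamma> / 2))"
proof -
  have "\<exists>C. is_code X c K n C \<and> (n > 0 \<longrightarrow> r \<le> (1 / real n) * ln (real (code_size C))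
     \<and> err_prob (W n) C \<le> dens_prob W P (outdist W P) (r + \<gamma>) n + 2 * exp (real n * (- \<gamma> / 2)))" for n
  proof (cases "n > 0 \<and> r > 0")
    case True
    then show ?thesis
      using feinstein_code[of P n X c K r \<gamma> W] P g by (auto simp: Pck_def)
  next
    case False
    obtain x0 where "x0 \<in> Xck X c K n" using ne by auto
    from single_codeword_code[OF this, of "W n"] False show ?thesis
      by (intro exI[of _ "(1, \<lambda>_. x0, \<lambda>_. UNIV)"]) (auto simp: code_size_def intro!: add_nonneg_nonneg dens_prob_nonneg)
  qed
  then obtain \<Phi> where "\<And>n. is_code X c K n (\<Phi> n) \<and> (n > 0 \<longrightarrow> r \<le> (1 / real n) * ln (real (code_size (\<Phi> n)))
     \<and> err_prob (W n) (\<Phi> n) \<le> dens_prob W P (outdist W P) (r + \<gamma>) n + 2 * exp (real n * (- \<gamma> / 2)))"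
    by metis
  then show ?thesis by (auto simp: code_seqs_def)
qed

subsection \<open>Achievability\<close>

lemma achievability:
  assumes P: "P \<in> Pck X c K" and ne: "\<And>n. Xck X c K n \<noteq> {}" and g: "\<gamma> > 0"
  shows "\<exists>\<Phi>\<in>code_seqs X c K. ereal r \<le> rate_liminf \<Phi> \<and> err_limsup W \<Phi> \<le> Ip (r + \<gamma>) P W"
proof -
  obtain \<Phi> where \<Phi>: "\<Phi> \<in> code_seqs X c K"
    and rate: "\<And>n. n > 0 \<Longrightarrow> r \<le> (1 / real n) * ln (real (code_size (\<Phi> n)))"
    and err: "\<And>n. n > 0 \<Longrightarrow> err_prob (W n) (\<Phi> n)
                \<le> dens_prob W P (outdist W P) (r + \<gamma>) n + 2 * exp (real n * (- \<gamma> / 2))"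
    using code_sequence_exists[OF P ne g, of r W] by blast
  have "ereal r \<le> rate_liminf \<Phi>"
    unfolding rate_liminf_def
    by (rule Liminf_bounded) (use eventually_gt_at_top in \<open>eventually_elim, use rate in simp\<close>)
  moreover have "err_limsup W \<Phi> \<le> Ip (r + \<gamma>) P W"
    unfolding err_limsup_def Ip_def
  proof (rule limsup_le_up_to_vanishing)
    show "eventually (\<lambda>n. err_prob (W n) (\<Phi> n)
        \<le> dens_prob W P (outdist W P) (r + \<gamma>) n + 2 * exp (real n * (- \<gamma> / 2))) sequentially"
      using eventually_gt_at_top[of "0::nat"] by eventually_elim (use err in simp)
    show "(\<lambda>n. 2 * exp (real n * (- \<gamma> / 2))) \<longlonglongrightarrow> 0"
      using exp_linear_vanish[of "- \<gamma> / 2"] g by (auto intro: tendsto_mult_right_zero)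
  qed
  ultimately show ?thesis using \<Phi> by blast
qed

lemma achievability_eventually:
  assumes P: "P \<in> Pck X c K" and ne: "\<And>n. Xck X c K n \<noteq> {}" and g: "\<gamma> > 0"
    and spectrum: "Ip (R - \<gamma>) P W \<le> ereal s"
  shows "\<exists>\<Phi>\<in>code_seqs X c K. eventually (\<lambda>n. R - 3 * \<gamma> \<le> (1 / real n) * ln (real (code_size (\<Phi> n)))
                                 \<and> err_prob (W n) (\<Phi> n) \<le> s + 3 * \<gamma>) sequentially"
proof -
  obtain \<Phi> where \<Phi>: "\<Phi> \<in> code_seqs X c K" and rate: "ereal (R - 2 * \<gamma>) \<le> rate_liminf \<Phi>"
    and err: "err_limsup W \<Phi> \<le> Ip (R - 2 * \<gamma> + \<gamma>) P W"
    using achievability[OF P ne g, of "R - 2 * \<gamma>" W] by blast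
  have "ereal (R - 3 * \<gamma>) < rate_liminf \<Phi>"
    by (rule order.strict_trans2[OF _ rate]) (use g in simp)
  then have "eventually (\<lambda>n. R - 3 * \<gamma> < (1 / real n) * ln (real (code_size (\<Phi> n)))) sequentially"
    unfolding rate_liminf_def by (auto dest: less_LiminfD)
  moreover have "err_limsup W \<Phi> \<le> ereal s"
    using err spectrum by (simp add: algebra_simps)
  then have "err_limsup W \<Phi> < ereal (s + 3 * \<gamma>)"
    by (rule order.strict_trans1) (use g in simp)
  then have "eventually (\<lambda>n. err_prob (W n) (\<Phi> n) < s + 3 * \<gamma>) sequentially"
    unfolding err_limsup_def by (auto dest: Limsup_lessD)
  ultimately have "eventually (\<lambda>n. R - 3 * \<gamma> \<le> (1 / real n) * ln (real (code_size (\<Phi> n)))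
                                 \<and> err_prob (W n) (\<Phi> n) \<le> s + 3 * \<gamma>) sequentially"
    by eventually_elim auto
  with \<Phi> show ?thesis by blast
qed

text \<open>Rate R is achievable with asymptotic error at most the left limit of I_p at R:
  take the sequences of achievability_eventually for gamma = 1/(k+1) and select diagonally.\<close>
lemma achievability_left_limit:
  assumes P: "P \<in> Pck X c K" and ne: "\<And>n. Xck X c K n \<noteq> {}"
  shows "\<exists>\<Phi>\<in>code_seqs X c K. ereal R \<le> rate_liminf \<Phi> \<and> err_limsup W \<Phi> \<le> (SUP \<gamma>\<in>{0<..}. Ip (R - \<gamma>) P W)"
proof -
  define S where "S = (SUP \<gamma>\<in>{0<..}. Ip (R - \<gamma>) P W)"
  have "Ip (R - 1) P W \<le> S" unfolding S_def by (rule SUP_upper) simp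
  moreover have "S \<le> 1" unfolding S_def by (rule SUP_least) (rule Ip_bounds(2))
  ultimately obtain s where Ss: "S = ereal s" using Ip_bounds(1)[of "R - 1" P W] by (cases S) auto
  define \<gamma> where "\<gamma> k = inverse (real (Suc k))" for k :: nat
  have g: "\<gamma> k > 0" for k by (simp add: \<gamma>_def)
  have spectrum: "Ip (R - \<gamma> k) P W \<le> ereal s" for k
    unfolding Ss[symmetric] S_def using g by (intro SUP_upper) simp
  define good where "good k \<Phi> \<longleftrightarrow> \<Phi> \<in> code_seqs X c K \<and>
      eventually (\<lambda>n. R - 3 * \<gamma> k \<le> (1 / real n) * ln (real (code_size (\<Phi> n)))
                     \<and> err_prob (W n) (\<Phi> n) \<le> s + 3 * \<gamma> k) sequentially" for k \<Phi>
  have "\<forall>k. \<exists>\<Phi>. good k \<Phi>"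
    using achievability_eventually[OF P ne g spectrum] unfolding good_def Bex_def by (intro allI)
  then obtain \<Phi>s where "good k (\<Phi>s k)" for k
    by (metis choice)
  then have \<Phi>s: "\<And>k. \<Phi>s k \<in> code_seqs X c K"
    and ev: "\<And>k. eventually (\<lambda>n. R - 3 * \<gamma> k \<le> (1 / real n) * ln (real (code_size (\<Phi>s k n)))
                                 \<and> err_prob (W n) (\<Phi>s k n) \<le> s + 3 * \<gamma> k) sequentially"
    unfolding good_def by auto
  have "(\<lambda>k. 3 * \<gamma> k) \<longlonglongrightarrow> 0"
    unfolding \<gamma>_def using tendsto_mult_right_zero[OF LIMSEQ_inverse_real_of_nat] .
  then obtain \<kappa> where
    "ereal R \<le> liminf (\<lambda>n. ereal ((1 / real n) * ln (real (code_size (\<Phi>s (\<kappa> n) n)))))"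
    "limsup (\<lambda>n. ereal (err_prob (W n) (\<Phi>s (\<kappa> n) n))) \<le> ereal s"
    using diagonal_selection[where \<alpha>=R and \<beta>=s
        and a="\<lambda>k n. (1 / real n) * ln (real (code_size (\<Phi>s k n)))"
        and b="\<lambda>k n. err_prob (W n) (\<Phi>s k n)", OF _ ev] by blast
  moreover have "(\<lambda>n. \<Phi>s (\<kappa> n) n) \<in> code_seqs X c K"
    using \<Phi>s by (simp add: code_seqs_def)
  ultimately show ?thesis
    unfolding rate_liminf_def err_limsup_def S_def[symmetric] Ss
    by (intro bexI[of _ "\<lambda>n. \<Phi>s (\<kappa> n) n"] conjI)
qed

subsection \<open>Converse\<close>

definition codeword_dist :: "(nat \<Rightarrow> ('x, 'y) code) \<Rightarrow> nat \<Rightarrow> 'x pmf" where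
  "codeword_dist \<Phi> n = map_pmf (fst (snd (\<Phi> n))) (pmf_of_set {1..fst (\<Phi> n)})"

lemma codeword_dist_Pck:
  assumes "\<Phi> \<in> code_seqs X c K"
  shows "codeword_dist \<Phi> \<in> Pck X c K"
proof -
  have "set_pmf (codeword_dist \<Phi> n) \<subseteq> Xck X c K n" for n
  proof -
    obtain N \<phi> D where eq: "\<Phi> n = (N, \<phi>, D)" by (metis prod_cases3)
    have "is_code X c K n (\<Phi> n)" using assms by (simp add: code_seqs_def)
    then show ?thesis by (auto simp: codeword_dist_def eq is_code_def)
  qed
  then show ?thesis by (simp add: Pck_def)
qed

lemma converse_sequence:
  assumes \<Phi>: "\<Phi> \<in> code_seqs X c K" and rr: "r < r'"
    and ev: "eventually (\<lambda>n. r' < (1 / real n) * ln (real (code_size (\<Phi> n)))) sequentially"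
  shows "Ip r (codeword_dist \<Phi>) W \<le> err_limsup W \<Phi>"
  unfolding Ip_def err_limsup_def
proof (rule limsup_le_up_to_vanishing)
  show "(\<lambda>n. exp (real n * (r - r'))) \<longlonglongrightarrow> 0" using rr by (intro exp_linear_vanish) simp
  show "eventually (\<lambda>n. dens_prob W (codeword_dist \<Phi>) (outdist W (codeword_dist \<Phi>)) r n
      \<le> err_prob (W n) (\<Phi> n) + exp (real n * (r - r'))) sequentially"
    using ev eventually_gt_at_top[of "0::nat"]
  proof eventually_elim
    case (elim n)
    then have n: "n > 0" and rate: "r' < (1 / real n) * ln (real (code_size (\<Phi> n)))" by auto
    obtain N \<phi> D where eq: "\<Phi> n = (N, \<phi>, D)" by (metis prod_cases3)
    have "is_code X c K n (\<Phi> n)" using \<Phi> by (simp add: code_seqs_def)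
    then have N1: "1 \<le> N" and dj: "disjoint_family_on D {1..N}"
      by (auto simp: eq is_code_def disjoint_family_on_def)
    have "real n * r' < ln (real N)" using rate n by (simp add: eq code_size_def field_simps)
    then have "exp (real n * r') < exp (ln (real N))" by simp
    then have Nbig: "exp (real n * r') < real N" using N1 by simp
    let ?p = "codeword_dist \<Phi>"
    have "dens_prob W ?p (outdist W ?p) r n
        \<le> measure_pmf.prob (joint W ?p n) {(x,y). pmf (W n x) y \<le> exp (real n * r) * pmf (outdist W ?p n) y}"
      unfolding dens_prob_outdist_threshold[OF n] by (intro measure_pmf.finite_measure_mono) auto
    also have "\<dots> \<le> err_prob (W n) (\<Phi> n) + exp (real n * r) / N"
      using verdu_han_converse[OF N1 dj, where \<alpha>="exp (real n * r)" and V="W n" and \<phi>=\<phi>]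
      by (simp add: joint_def outdist_def codeword_dist_def eq err_prob_def)
    also have "exp (real n * r) / N \<le> exp (real n * r) / exp (real n * r')"
      using Nbig N1 by (intro divide_left_mono) auto
    also have "\<dots> = exp (real n * (r - r'))"
      by (simp add: exp_diff[symmetric] right_diff_distrib)
    finally show ?case by simp
  qed
qed

lemma converse_left_limit:
  assumes \<Phi>: "\<Phi> \<in> code_seqs X c K" and rate: "ereal R \<le> rate_liminf \<Phi>"
  shows "(SUP \<gamma>\<in>{0<..}. Ip (R - \<gamma>) (codeword_dist \<Phi>) W) \<le> err_limsup W \<Phi>"
proof (rule SUP_least)
  fix \<gamma> :: real assume "\<gamma> \<in> {0<..}"
  then have g: "\<gamma> > 0" by simp
  have "ereal (R - \<gamma>/2) < rate_liminf \<Phi>"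
    by (rule order.strict_trans2[OF _ rate]) (use g in simp)
  then have "eventually (\<lambda>n. R - \<gamma>/2 < (1 / real n) * ln (real (code_size (\<Phi> n)))) sequentially"
    unfolding rate_liminf_def by (auto dest: less_LiminfD)
  then show "Ip (R - \<gamma>) (codeword_dist \<Phi>) W \<le> err_limsup W \<Phi>"
    by (rule converse_sequence[OF \<Phi>, rotated]) (use g in simp)
qed

lemma converse_eps:
  assumes \<Phi>: "\<Phi> \<in> code_seqs X c K" and err: "err_limsup W \<Phi> \<le> ereal eps"
  shows "rate_liminf \<Phi> \<le> Ieps eps (codeword_dist \<Phi>) W"
proof (rule ccontr)
  assume "\<not> ?thesis"
  then obtain z z' where z: "Ieps eps (codeword_dist \<Phi>) W < ereal z" "z < z'"
    and z': "ereal z' < rate_liminf \<Phi>"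
    by (metis ereal_dense2 less_ereal.simps(1) not_le)
  have "eventually (\<lambda>n. z' < (1 / real n) * ln (real (code_size (\<Phi> n)))) sequentially"
    using z' unfolding rate_liminf_def by (auto dest: less_LiminfD)
  then have "Ip z (codeword_dist \<Phi>) W \<le> ereal eps"
    using converse_sequence[OF \<Phi> z(2)] err by (blast intro: order.trans)
  then have "ereal z \<le> Ieps eps (codeword_dist \<Phi>) W" unfolding Ieps_def by (intro Sup_upper) auto
  with z(1) show False by simp
qed

lemma Cp_eq_INF_spectrum:
  fixes W :: "nat \<Rightarrow> 'x \<Rightarrow> 'y pmf" and X :: "nat \<Rightarrow> 'x set"
  assumes ne: "\<And>n. Xck X c K n \<noteq> {}"
  shows "Cp R W X c K = (INF P\<in>Pck X c K. SUP \<gamma>\<in>{0<..}. Ip (R - \<gamma>) P W)"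
proof (rule antisym)
  show "Cp R W X c K \<le> (INF P\<in>Pck X c K. SUP \<gamma>\<in>{0<..}. Ip (R - \<gamma>) P W)"
  proof (rule INF_greatest)
    fix P assume P: "P \<in> Pck X c K"
    obtain \<Phi> where "\<Phi> \<in> code_seqs X c K" "ereal R \<le> rate_liminf \<Phi>"
      and err: "err_limsup W \<Phi> \<le> (SUP \<gamma>\<in>{0<..}. Ip (R - \<gamma>) P W)"
      using achievability_left_limit[OF P ne, of R W] by blast
    then have "Cp R W X c K \<le> err_limsup W \<Phi>"
      unfolding Cp_def by (intro Inf_lower) auto
    with err show "Cp R W X c K \<le> (SUP \<gamma>\<in>{0<..}. Ip (R - \<gamma>) P W)" by simp
  qed
  show "(INF P\<in>Pck X c K. SUP \<gamma>\<in>{0<..}. Ip (R - \<gamma>) P W) \<le> Cp R W X c K"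
    unfolding Cp_def
  proof (rule Inf_greatest, clarify)
    fix \<Phi> :: "nat \<Rightarrow> ('x, 'y) code"
    assume \<Phi>: "\<Phi> \<in> code_seqs X c K" and rate: "ereal R \<le> rate_liminf \<Phi>"
    have "(INF P\<in>Pck X c K. SUP \<gamma>\<in>{0<..}. Ip (R - \<gamma>) P W)
          \<le> (SUP \<gamma>\<in>{0<..}. Ip (R - \<gamma>) (codeword_dist \<Phi>) W)"
      by (rule INF_lower) (rule codeword_dist_Pck[OF \<Phi>])
    also have "\<dots> \<le> err_limsup W \<Phi>" by (rule converse_left_limit[OF \<Phi> rate])
    finally show "(INF P\<in>Pck X c K. SUP \<gamma>\<in>{0<..}. Ip (R - \<gamma>) P W) \<le> err_limsup W \<Phi>" .
  qed
qed

lemma Ceps_eq_SUP_spectrum: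
  fixes W :: "nat \<Rightarrow> 'x \<Rightarrow> 'y pmf" and X :: "nat \<Rightarrow> 'x set"
  assumes ne: "\<And>n. Xck X c K n \<noteq> {}"
  shows "Ceps eps W X c K = (SUP P\<in>Pck X c K. Ieps eps P W)"
proof (rule antisym)
  show "Ceps eps W X c K \<le> (SUP P\<in>Pck X c K. Ieps eps P W)"
    unfolding Ceps_def
  proof (rule Sup_least, clarify)
    fix \<Phi> :: "nat \<Rightarrow> ('x, 'y) code"
    assume \<Phi>: "\<Phi> \<in> code_seqs X c K" and err: "err_limsup W \<Phi> \<le> ereal eps"
    have "rate_liminf \<Phi> \<le> Ieps eps (codeword_dist \<Phi>) W" by (rule converse_eps[OF \<Phi> err])
    also have "\<dots> \<le> (SUP P\<in>Pck X c K. Ieps eps P W)"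
      by (rule SUP_upper) (rule codeword_dist_Pck[OF \<Phi>])
    finally show "rate_liminf \<Phi> \<le> (SUP P\<in>Pck X c K. Ieps eps P W)" .
  qed
  show "(SUP P\<in>Pck X c K. Ieps eps P W) \<le> Ceps eps W X c K"
  proof (rule SUP_least)
    fix P assume P: "P \<in> Pck X c K"
    show "Ieps eps P W \<le> Ceps eps W X c K"
      unfolding Ieps_def
    proof (rule Sup_least, clarify)
      fix R assume R: "Ip R P W \<le> ereal eps"
      show "ereal R \<le> Ceps eps W X c K"
      proof (rule ereal_le_epsilon2)
        fix e :: real assume e: "0 < e"
        obtain \<Phi> where \<Phi>: "\<Phi> \<in> code_seqs X c K" "ereal (R - e) \<le> rate_liminf \<Phi>"
          "err_limsup W \<Phi> \<le> Ip (R - e + e) P W"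
          using achievability[OF P ne e, of "R - e" W] by blast
        have "rate_liminf \<Phi> \<le> Ceps eps W X c K"
          unfolding Ceps_def by (rule Sup_upper) (use \<Phi> R in auto)
        with \<Phi>(2) have "ereal (R - e) + ereal e \<le> Ceps eps W X c K + ereal e"
          by (intro add_right_mono) simp
        then show "ereal R \<le> Ceps eps W X c K + ereal e" by simp
      qed
    qed
  qed
qed

text \<open>The coding theorem.\<close>
theorem mainTheorem8:
  fixes W :: "nat \<Rightarrow> 'x \<Rightarrow> 'y pmf" and X :: "nat \<Rightarrow> 'x set"
    and c :: "nat \<Rightarrow> 'x \<Rightarrow> real" and K :: real
  assumes "\<And>n. countable (X n)"
    and "\<And>n. Xck X c K n \<noteq> {}"
  shows "(\<forall>R::real.
           Cp R W X c K =
             (INF P\<in>Pck X c K. Lim (at_right (0::real)) (\<lambda>\<gamma>. Ip (R - \<gamma>) P W))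
         \<and> Cp R W X c K =
             (INF P\<in>Pck X c K. SUP Q::nat \<Rightarrow> 'y pmf.
                 Lim (at_right (0::real)) (\<lambda>\<gamma>. Jp (R - \<gamma>) P Q W)))
    \<and> (\<forall>eps::real. 0 \<le> eps \<and> eps < 1 \<longrightarrow>
           Ceps eps W X c K = (SUP P\<in>Pck X c K. Ieps eps P W)
         \<and> Ceps eps W X c K = (SUP P\<in>Pck X c K. INF Q::nat \<Rightarrow> 'y pmf. Jeps eps P Q W))"
proof (intro conjI allI impI)
  fix R :: real
  show "Cp R W X c K = (INF P\<in>Pck X c K. Lim (at_right (0::real)) (\<lambda>\<gamma>. Ip (R - \<gamma>) P W))"
    unfolding Ip_Lim by (rule Cp_eq_INF_spectrum[OF assms(2)])
  show "Cp R W X c K = (INF P\<in>Pck X c K. SUP Q::nat \<Rightarrow> 'y pmf. Lim (at_right (0::real)) (\<lambda>\<gamma>. Jp (R - \<gamma>) P Q W))"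
    unfolding Jp_Lim SUP_Jp_eq_Ip by (rule Cp_eq_INF_spectrum[OF assms(2)])
next
  fix eps :: real
  show "Ceps eps W X c K = (SUP P\<in>Pck X c K. Ieps eps P W)"
    by (rule Ceps_eq_SUP_spectrum[OF assms(2)])
  show "Ceps eps W X c K = (SUP P\<in>Pck X c K. INF Q::nat \<Rightarrow> 'y pmf. Jeps eps P Q W)"
    unfolding Ieps_eq_INF_Jeps[symmetric] by (rule Ceps_eq_SUP_spectrum[OF assms(2)])
qed

end
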